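(* Let $W:[0,\infty)\to\mathbb{R}$ be a bounded monotone $\mathcal{C}^1$ function with $W'$ bounded, let $\Omega(r)=r^{-2}\int_0^rW(s)s\,ds$, let $m\in\mathbb{Z}\setminus\{0\}$ and $s\in\mathbb{C}$ with $\mathrm{Re}(s)\ne0$, and set $\gamma(r)=s+im\Omega(r)$. Then the equation $-\partial_r\bigl(r^2\partial_r^*u\bigr)+\Bigl(m^2+\frac{imrW'(r)}{\gamma(r)}\Bigr)u=0$ on $(0,\infty)$ has no nontrivial solution $u\in H^1(\mathbb{R}_+,r\,dr)$.
   Context: $\partial_r^*=\partial_r+\frac1r$. This is the eigenvalue equation (for the radial velocity) of the linearization at a columnar vortex for two-dimensional perturbations ($k=0$). *)

theory Defs
  imports "HOL-Analysis.Analysis"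
begin

definition Omega :: "(real \<Rightarrow> real) \<Rightarrow> real \<Rightarrow> real" where
  "Omega W r = integral {0..r} (\<lambda>s. W s * s) / r\<^sup>2"

definition gam :: "(real \<Rightarrow> real) \<Rightarrow> int \<Rightarrow> complex \<Rightarrow> real \<Rightarrow> complex" where
  "gam W m s r = s + \<i> * of_int m * complex_of_real (Omega W r)"

end

theory Submission
  imports Defs
begin

text \<open>
  Write F = r^2 (d/dr + 1/r) u = r (u + r u') for the flux, so that the equation reads
  F' = (m^2 + i q) u with q = m r W' / \<gamma>. As W is monotone, m r W' has a fixed sign; as
  Re \<gamma> = Re s \<noteq> 0 is constant and Im \<gamma> is bounded, one real \<kappa> makes
  Re ((1 - i \<kappa>) i q) \<ge> 0 everywhere. Then P = Re ((1 - i \<kappa>) F r (cnj u)) satisfies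
  P' \<ge> r |u + r u'|^2 + m^2 r |u|^2 \<ge> 0, while Cauchy-Schwarz gives
  P^2 \<le> (1 + \<kappa>^2) r^2 (r |u|^2) (r |u + r u'|^2). By AM-GM this yields the Riccati inequality
  (-1/P)' + (1 + \<kappa>^2) r |u|^2 \<ge> 2/r where P \<noteq> 0. Since P is monotone, a point r with
  P(r) \<noteq> 0 would give zero-free intervals of arbitrary logarithmic length ending at r
  (if P(r) < 0) or starting at r (if P(r) > 0); integrating over them contradicts r |u|^2 \<in> L^1.
  Hence P = 0, so P' = 0 and u = 0.
\<close>


lemma riccati_lower_bound:
  fixes p p' x y r L :: real
  assumes "p \<noteq> 0" "r > 0" "x > 0" "L > 0" "y \<le> p'" "p\<^sup>2 \<le> L * r\<^sup>2 * x * y"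
  shows "2 / r \<le> p' / p\<^sup>2 + L * x"
proof -
  have "1 / (L * r\<^sup>2 * x) \<le> y / p\<^sup>2"
    using assms by (simp add: divide_simps mult.commute mult.left_commute)
  also have "\<dots> \<le> p' / p\<^sup>2"
    using assms by (simp add: divide_right_mono)
  finally have "1 / (L * r\<^sup>2 * x) + L * x \<le> p' / p\<^sup>2 + L * x"
    by simp
  moreover have "2 / r \<le> 1 / (L * r\<^sup>2 * x) + L * x"
  proof -
    have "2 * (L * x * r) \<le> (L * x * r)\<^sup>2 + 1"
      using zero_le_power2[of "L * x * r - 1"] by (simp add: power2_diff)
    then show ?thesis
      using assms by (simp add: field_simps power2_eq_square)
  qed
  ultimately show ?thesis
    by linarith
qed

lemma riccati_log_bound:
  fixes P P' X :: "real \<Rightarrow> real"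
  assumes "0 < a" "a \<le> b"
    and P_deriv: "\<And>t. t \<in> {a..b} \<Longrightarrow> (P has_real_derivative P' t) (at t)"
    and P_nz: "\<And>t. t \<in> {a..b} \<Longrightarrow> P t \<noteq> 0"
    and X_cont: "continuous_on {a..b} X"
    and riccati: "\<And>t. t \<in> {a..b} \<Longrightarrow> 2 / t \<le> P' t / (P t)\<^sup>2 + L * X t"
  shows "2 * (ln b - ln a) \<le> 1 / P a - 1 / P b + L * integral {a..b} X"
proof (rule has_integral_le)
  show "((\<lambda>t. 2 / t) has_integral 2 * (ln b - ln a)) {a..b}"
  proof -
    have "((\<lambda>t. 2 * ln t) has_real_derivative 2 / t) (at t within {a..b})" if "t \<in> {a..b}" for t
      using DERIV_cmult[OF DERIV_ln, of t 2] that \<open>0 < a\<close>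
      by (simp add: divide_inverse has_field_derivative_at_within)
    from fundamental_theorem_of_calculus[OF \<open>a \<le> b\<close> this[unfolded has_real_derivative_iff_has_vector_derivative]]
    show ?thesis
      by (simp add: algebra_simps)
  qed
  have "((\<lambda>t. P' t / (P t)\<^sup>2) has_integral 1 / P a - 1 / P b) {a..b}"
  proof -
    have "((\<lambda>t. - inverse (P t)) has_real_derivative P' t / (P t)\<^sup>2) (at t within {a..b})"
      if "t \<in> {a..b}" for t
    proof -
      have "- (- (P' t * inverse (P t ^ Suc (Suc 0)))) = P' t / (P t)\<^sup>2"
        by (simp add: divide_inverse power2_eq_square)
      with DERIV_minus[OF DERIV_inverse_fun[OF P_deriv[OF that] P_nz[OF that]]]
      show ?thesis
        by (simp add: has_field_derivative_at_within)
    qed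
    from fundamental_theorem_of_calculus[OF \<open>a \<le> b\<close> this[unfolded has_real_derivative_iff_has_vector_derivative]]
    show ?thesis
      by (simp add: divide_inverse)
  qed
  moreover have "((\<lambda>t. L * X t) has_integral L * integral {a..b} X) {a..b}"
    using integrable_continuous_interval[OF X_cont] by (intro has_integral_mult_right integrable_integral)
  ultimately show "((\<lambda>t. P' t / (P t)\<^sup>2 + L * X t) has_integral 1 / P a - 1 / P b + L * integral {a..b} X) {a..b}"
    by (rule has_integral_add)
qed (rule riccati)

lemma riccati_vanishing:
  fixes P P' X :: "real \<Rightarrow> real" and L r :: real
  assumes P_deriv: "\<And>t. 0 < t \<Longrightarrow> (P has_real_derivative P' t) (at t)"
    and P'_nonneg: "\<And>t. 0 < t \<Longrightarrow> 0 \<le> P' t"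
    and X_nonneg: "\<And>t. 0 < t \<Longrightarrow> 0 \<le> X t"
    and X_cont: "continuous_on {0<..} X"
    and X_int: "X integrable_on {0<..}"
    and "0 \<le> L"
    and riccati: "\<And>t. 0 < t \<Longrightarrow> P t \<noteq> 0 \<Longrightarrow> 2 / t \<le> P' t / (P t)\<^sup>2 + L * X t"
    and "0 < r"
  shows "P r = 0"
proof (rule ccontr)
  assume "P r \<noteq> 0"
  have P_mono: "P a \<le> P b" if "0 < a" "a \<le> b" for a b
  proof (rule DERIV_nonneg_imp_nondecreasing[OF \<open>a \<le> b\<close>])
    fix t assume "a \<le> t" "t \<le> b"
    with \<open>0 < a\<close> have "0 < t"
      by simp
    then show "\<exists>y. (P has_real_derivative y) (at t) \<and> 0 \<le> y"
      using P_deriv P'_nonneg by blast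
  qed
  define I where "I = integral {0<..} X"
  have "0 \<le> I"
    unfolding I_def by (rule integral_nonneg[OF X_int]) (simp add: X_nonneg)
  define M where "M = L * I + \<bar>1 / P r\<bar> + 1"
  have "0 < M"
    using mult_nonneg_nonneg[OF \<open>0 \<le> L\<close> \<open>0 \<le> I\<close>] by (simp add: M_def add_nonneg_pos)
  obtain a b where ab: "0 < a" "a \<le> b" "ln b - ln a = M / 2"
    and nz: "\<And>t. t \<in> {a..b} \<Longrightarrow> P t \<noteq> 0" and ends: "1 / P a - 1 / P b \<le> \<bar>1 / P r\<bar>"
  proof (cases "P r < 0")
    case True
    define a where "a = r * exp (- M / 2)"
    have "0 < a" "a \<le> r"
      using \<open>0 < r\<close> \<open>0 < M\<close> by (simp_all add: a_def mult_le_cancel_left1)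
    have neg: "P t < 0" if "t \<in> {a..r}" for t
      using P_mono[of t r] that \<open>0 < a\<close> True by simp
    show thesis
    proof (rule that[OF \<open>0 < a\<close> \<open>a \<le> r\<close>])
      show "ln r - ln a = M / 2"
        using \<open>0 < r\<close> by (simp add: a_def ln_mult)
      show "1 / P a - 1 / P r \<le> \<bar>1 / P r\<bar>"
        using neg[of a] \<open>a \<le> r\<close> True by simp
    qed (use neg in fastforce)
  next
    case False
    define b where "b = r * exp (M / 2)"
    have "r \<le> b"
      using \<open>0 < r\<close> \<open>0 < M\<close> by (simp add: b_def)
    have pos: "0 < P t" if "t \<in> {r..b}" for t
      using P_mono[of r t] that \<open>0 < r\<close> \<open>P r \<noteq> 0\<close> False by simp
    show thesis
    proof (rule that[OF \<open>0 < r\<close> \<open>r \<le> b\<close>])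
      show "ln b - ln r = M / 2"
        using \<open>0 < r\<close> by (simp add: b_def ln_mult)
      show "1 / P r - 1 / P b \<le> \<bar>1 / P r\<bar>"
        using pos[of r] pos[of b] \<open>r \<le> b\<close> by simp
    qed (use pos in fastforce)
  qed
  have "M = 2 * (ln b - ln a)"
    using ab by simp
  also have "\<dots> \<le> 1 / P a - 1 / P b + L * integral {a..b} X"
  proof (rule riccati_log_bound[OF ab(1,2)])
    show "continuous_on {a..b} X"
      using ab by (intro continuous_on_subset[OF X_cont]) auto
    show "\<And>t. t \<in> {a..b} \<Longrightarrow> (P has_real_derivative P' t) (at t)"
      and "\<And>t. t \<in> {a..b} \<Longrightarrow> 2 / t \<le> P' t / (P t)\<^sup>2 + L * X t"
      using ab nz P_deriv riccati by simp_all
  qed (rule nz)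
  also have "\<dots> \<le> \<bar>1 / P r\<bar> + L * I"
  proof -
    have "integral {a..b} X \<le> I"
      unfolding I_def
    proof (rule integral_subset_le)
      show "X integrable_on {a..b}"
        using ab by (intro integrable_continuous_interval continuous_on_subset[OF X_cont]) auto
    qed (use ab X_int X_nonneg in auto)
    then show ?thesis
      using ends \<open>0 \<le> L\<close> by (simp add: mult_left_mono add_mono)
  qed
  finally show False
    unfolding M_def by simp
qed

lemma has_real_derivative_Re_flux_pairing:
  fixes u F :: "real \<Rightarrow> complex" and u' F' \<zeta> :: complex
  assumes u_deriv: "(u has_vector_derivative u') (at r)"
    and F_deriv: "(F has_vector_derivative F') (at r)"
  shows "((\<lambda>t. Re (\<zeta> * (F t * (of_real t * cnj (u t))))) has_real_derivative
      Re (\<zeta> * (F r * (of_real r * cnj u' + cnj (u r)) + F' * (of_real r * cnj (u r))))) (at r)"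
proof -
  have "((\<lambda>t. of_real t * cnj (u t)) has_vector_derivative of_real r * cnj u' + cnj (u r)) (at r)"
    using has_vector_derivative_mult[OF has_vector_derivative_of_real[OF DERIV_ident]
        has_vector_derivative_cnj[OF u_deriv]]
    by simp
  from has_vector_derivative_mult[OF F_deriv this]
  have "((\<lambda>t. Re (\<zeta> * (F t * (of_real t * cnj (u t))))) has_vector_derivative
      Re (\<zeta> * (F r * (of_real r * cnj u' + cnj (u r)) + F' * (of_real r * cnj (u r))))) (at r)"
    by (intro bounded_linear.has_vector_derivative[OF bounded_linear_Re]
        bounded_linear.has_vector_derivative[OF bounded_linear_mult_right])
  then show ?thesis
    by (simp add: has_real_derivative_iff_has_vector_derivative)
qed

lemma Re_flux_pairing_derivative_eq:
  fixes u u' q \<zeta> :: complex and r \<mu> :: real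
  assumes "Re \<zeta> = 1"
  shows "Re (\<zeta> * ((of_real (r\<^sup>2) * u' + of_real r * u) * (of_real r * cnj u' + cnj u)
              + (of_real \<mu> + \<i> * q) * u * (of_real r * cnj u)))
    = r * (cmod (u + of_real r * u'))\<^sup>2 + \<mu> * (r * (cmod u)\<^sup>2) + r * (cmod u)\<^sup>2 * Re (\<zeta> * \<i> * q)"
proof -
  have "(of_real (r\<^sup>2) * u' + of_real r * u) * (of_real r * cnj u' + cnj u)
        + (of_real \<mu> + \<i> * q) * u * (of_real r * cnj u)
      = of_real r * ((u + of_real r * u') * cnj (u + of_real r * u'))
        + (of_real \<mu> + \<i> * q) * of_real r * (u * cnj u)"
    by (simp add: algebra_simps power2_eq_square)
  also have "\<dots> = of_real (r * (cmod (u + of_real r * u'))\<^sup>2) + (of_real \<mu> + \<i> * q) * of_real (r * (cmod u)\<^sup>2)"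
    by (simp only: complex_norm_square[symmetric] of_real_mult) (simp add: algebra_simps)
  finally show ?thesis
    using assms by (simp add: algebra_simps)
qed

lemma Re_flux_pairing_sq_le:
  fixes u u' \<zeta> :: complex and r :: real
  assumes "0 \<le> r"
  shows "(Re (\<zeta> * ((of_real (r\<^sup>2) * u' + of_real r * u) * (of_real r * cnj u))))\<^sup>2
    \<le> (cmod \<zeta>)\<^sup>2 * r\<^sup>2 * (r * (cmod u)\<^sup>2) * (r * (cmod (u + of_real r * u'))\<^sup>2)"
proof -
  have "cmod (\<zeta> * ((of_real (r\<^sup>2) * u' + of_real r * u) * (of_real r * cnj u)))
      = cmod \<zeta> * (r * cmod (u + of_real r * u')) * (r * cmod u)"
  proof -
    have factor: "(of_real (r\<^sup>2) * u' + of_real r * u) * (of_real r * cnj u)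
        = of_real r * (u + of_real r * u') * (of_real r * cnj u)"
      by (simp add: algebra_simps power2_eq_square)
    show ?thesis
      unfolding factor using assms by (simp add: norm_mult)
  qed
  with abs_Re_le_cmod[of "\<zeta> * ((of_real (r\<^sup>2) * u' + of_real r * u) * (of_real r * cnj u))"]
  have "\<bar>Re (\<zeta> * ((of_real (r\<^sup>2) * u' + of_real r * u) * (of_real r * cnj u)))\<bar>
      \<le> cmod \<zeta> * (r * cmod (u + of_real r * u')) * (r * cmod u)"
    by simp
  from power_mono[OF this abs_ge_zero, of 2]
  show ?thesis
    by (simp add: power_mult_distrib power2_eq_square algebra_simps)
qed

lemma flux_solution_vanishes:
  fixes u u' g' q :: "real \<Rightarrow> complex" and \<mu> \<kappa> r :: real
  assumes u_deriv: "\<And>t. 0 < t \<Longrightarrow> (u has_vector_derivative u' t) (at t)"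
    and flux_deriv: "\<And>t. 0 < t \<Longrightarrow>
        ((\<lambda>t. of_real (t\<^sup>2) * u' t + of_real t * u t) has_vector_derivative g' t) (at t)"
    and eqn: "\<And>t. 0 < t \<Longrightarrow> g' t = (of_real \<mu> + \<i> * q t) * u t"
    and "0 < \<mu>"
    and accretive: "\<And>t. 0 < t \<Longrightarrow> 0 \<le> Re ((1 - \<i> * \<kappa>) * \<i> * q t)"
    and u_L2: "(\<lambda>t. t * (cmod (u t))\<^sup>2) integrable_on {0<..}"
    and "0 < r"
  shows "u r = 0"
proof -
  define \<zeta> where "\<zeta> = 1 - \<i> * \<kappa>"
  define F where "F = (\<lambda>t. of_real (t\<^sup>2) * u' t + of_real t * u t)"
  define P where "P = (\<lambda>t. Re (\<zeta> * (F t * (of_real t * cnj (u t)))))"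
  define X where "X t = t * (cmod (u t))\<^sup>2" for t
  define Y where "Y t = t * (cmod (u t + of_real t * u' t))\<^sup>2" for t
  define P' where "P' t = Y t + \<mu> * X t + X t * Re (\<zeta> * \<i> * q t)" for t
  have X_nonneg: "0 \<le> X t" and Y_nonneg: "0 \<le> Y t" if "0 < t" for t
    using that by (simp_all add: X_def Y_def)
  have P_deriv: "(P has_real_derivative P' t) (at t)" if "0 < t" for t
  proof -
    have "P' t = Re (\<zeta> * (F t * (of_real t * cnj (u' t) + cnj (u t)) + g' t * (of_real t * cnj (u t))))"
      unfolding P'_def X_def Y_def F_def eqn[OF that]
      by (rule Re_flux_pairing_derivative_eq[symmetric]) (simp add: \<zeta>_def)
    with has_real_derivative_Re_flux_pairing[OF u_deriv[OF that] flux_deriv[OF that, folded F_def]]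
    show ?thesis
      unfolding P_def by simp
  qed
  have P'_ge: "Y t \<le> P' t" "\<mu> * X t \<le> P' t" if "0 < t" for t
    using X_nonneg[OF that] Y_nonneg[OF that] accretive[OF that] \<open>0 < \<mu>\<close>
    by (simp_all add: P'_def \<zeta>_def)
  have P'_nonneg: "0 \<le> P' t" if "0 < t" for t
    using Y_nonneg[OF that] P'_ge(1)[OF that] by linarith
  define L where "L = (cmod \<zeta>)\<^sup>2"
  have "0 < L"
    by (simp add: L_def \<zeta>_def complex_eq_iff)
  have riccati: "2 / t \<le> P' t / (P t)\<^sup>2 + L * X t" if "0 < t" "P t \<noteq> 0" for t
  proof (rule riccati_lower_bound[OF \<open>P t \<noteq> 0\<close> \<open>0 < t\<close> _ \<open>0 < L\<close> P'_ge(1)[OF \<open>0 < t\<close>]])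
    have "u t \<noteq> 0"
      using \<open>P t \<noteq> 0\<close> by (auto simp: P_def)
    then show "0 < X t"
      using \<open>0 < t\<close> by (simp add: X_def)
    show "(P t)\<^sup>2 \<le> L * t\<^sup>2 * X t * Y t"
      using Re_flux_pairing_sq_le[of t \<zeta> "u' t" "u t"] \<open>0 < t\<close>
      by (simp add: P_def F_def L_def X_def Y_def)
  qed
  have X_cont: "continuous_on {0<..} X"
    unfolding X_def using u_deriv
    by (intro continuous_intros continuous_at_imp_continuous_on ballI)
       (auto intro: has_vector_derivative_continuous)
  have P_zero: "P t = 0" if "0 < t" for t
    by (rule riccati_vanishing[OF P_deriv P'_nonneg X_nonneg X_cont _ _ riccati that])
       (use u_L2 \<open>0 < L\<close> in \<open>simp_all add: X_def\<close>)
  have "(P has_real_derivative 0) (at r)"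
    using P_zero \<open>0 < r\<close>
    by (intro has_field_derivative_transform_within_open[OF DERIV_const, of "{0<..}"]) auto
  then have "P' r = 0"
    using DERIV_unique P_deriv[OF \<open>0 < r\<close>] by blast
  then have "X r \<le> 0"
    using P'_ge(2)[OF \<open>0 < r\<close>] \<open>0 < \<mu>\<close> by (simp add: mult_le_0_iff)
  then show ?thesis
    using \<open>0 < r\<close> by (simp add: X_def mult_le_0_iff)
qed

lemma Re_rotated_quotient_nonneg:
  fixes \<gamma> :: complex and c \<kappa> :: real
  assumes "0 \<le> c * (\<kappa> * Re \<gamma> + Im \<gamma>)"
  shows "0 \<le> Re ((1 - \<i> * \<kappa>) * \<i> * (c / \<gamma>))"
proof -
  have "(1 - \<i> * \<kappa>) * \<i> * (c / \<gamma>) = (\<kappa> * c + \<i> * c) / \<gamma>"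
    by (simp add: algebra_simps)
  then have "Re ((1 - \<i> * \<kappa>) * \<i> * (c / \<gamma>)) = c * (\<kappa> * Re \<gamma> + Im \<gamma>) / (cmod \<gamma>)\<^sup>2"
    by (simp add: Re_divide' algebra_simps)
  with assms show ?thesis
    by simp
qed

lemma exists_rotation_Re_nonneg:
  fixes \<gamma> :: "real \<Rightarrow> complex" and c :: "real \<Rightarrow> real"
  assumes Re_const: "\<And>r. r \<in> S \<Longrightarrow> Re (\<gamma> r) = \<sigma>" and "\<sigma> \<noteq> 0"
    and Im_le: "\<And>r. r \<in> S \<Longrightarrow> \<bar>Im (\<gamma> r)\<bar> \<le> C"
    and e: "e = 1 \<or> e = -1" and sign: "\<And>r. r \<in> S \<Longrightarrow> 0 \<le> e * c r"
  obtains \<kappa> :: real where "\<And>r. r \<in> S \<Longrightarrow> 0 \<le> Re ((1 - \<i> * \<kappa>) * \<i> * (c r / \<gamma> r))"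
proof
  fix r assume r: "r \<in> S"
  have "c r * (e * C / \<sigma> * Re (\<gamma> r) + Im (\<gamma> r)) = (e * c r) * (C + e * Im (\<gamma> r))"
    using Re_const[OF r] \<open>\<sigma> \<noteq> 0\<close> e by (auto simp: algebra_simps)
  also have "\<dots> \<ge> 0"
    using Im_le[OF r] e by (intro mult_nonneg_nonneg[OF sign[OF r]]) (auto simp: abs_le_iff)
  finally show "0 \<le> Re ((1 - \<i> * (e * C / \<sigma>)) * \<i> * (c r / \<gamma> r))"
    by (rule Re_rotated_quotient_nonneg)
qed

lemma monotone_derivative_sign:
  fixes W W' :: "real \<Rightarrow> real"
  assumes W_deriv: "\<And>r. r \<ge> 0 \<Longrightarrow> (W has_real_derivative W' r) (at r within {0..})"
    and W_mono: "mono_on {0..} W \<or> monotone_on {0..} (\<le>) (\<ge>) W"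
  obtains \<epsilon> :: real where "\<epsilon> = 1 \<or> \<epsilon> = -1" "\<And>r. r > 0 \<Longrightarrow> 0 \<le> \<epsilon> * W' r"
proof -
  have deriv_at: "(W has_real_derivative W' r) (at r)" if "r > 0" for r
  proof -
    have "(W has_real_derivative W' r) (at r within {0<..})"
      by (rule has_field_derivative_subset[OF W_deriv]) (use that in auto)
    then show ?thesis
      using at_within_open[of r "{0<..}"] that by simp
  qed
  have interior: "r \<in> interior {0..}" if "r > 0" for r :: real
    using that by simp
  show thesis
  proof (cases "mono_on {0..} W")
    case True
    have "0 \<le> W' r" if "r > 0" for r
      by (rule mono_on_imp_deriv_nonneg[OF True deriv_at[OF that] interior[OF that]])
    then show thesis using that[of 1] by simp
  next
    case False
    then have "mono_on {0..} (\<lambda>r. - W r)"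
      using W_mono unfolding monotone_on_def by (meson neg_le_iff_le)
    then have "0 \<le> - W' r" if "r > 0" for r
      by (rule mono_on_imp_deriv_nonneg[OF _ DERIV_minus[OF deriv_at[OF that]] interior[OF that]])
    then show thesis using that[of "-1"] by simp
  qed
qed

lemma abs_Omega_le:
  fixes W :: "real \<Rightarrow> real"
  assumes W_cont: "continuous_on {0..} W" and W_le: "\<And>t. t \<ge> 0 \<Longrightarrow> \<bar>W t\<bar> \<le> B" and "r > 0"
  shows "\<bar>Omega W r\<bar> \<le> B"
proof -
  have "B \<ge> 0"
    using W_le[of 0] by simp
  have "norm (integral {0..r} (\<lambda>t. W t * t)) \<le> integral {0..r} (\<lambda>t. B * r)"
  proof (rule integral_norm_bound_integral)
    show "(\<lambda>t. W t * t) integrable_on {0..r}"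
      by (intro integrable_continuous_interval continuous_intros continuous_on_subset[OF W_cont]) auto
    show "\<And>t. t \<in> {0..r} \<Longrightarrow> norm (W t * t) \<le> B * r"
      using W_le \<open>B \<ge> 0\<close> by (auto simp: abs_mult intro: mult_mono)
  qed auto
  also have "\<dots> = B * r\<^sup>2"
    using \<open>r > 0\<close> by (simp add: power2_eq_square)
  finally show ?thesis
    using \<open>r > 0\<close> by (simp add: Omega_def divide_le_eq)
qed

lemma Im_gam_bounded:
  fixes W :: "real \<Rightarrow> real"
  assumes W_cont: "continuous_on {0..} W" and W_bdd: "bounded (W ` {0..})"
  obtains C where "\<And>r. 0 < r \<Longrightarrow> \<bar>Im (gam W m s r)\<bar> \<le> C"
proof -
  obtain B where B: "\<And>t. 0 \<le> t \<Longrightarrow> \<bar>W t\<bar> \<le> B"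
    using W_bdd by (fastforce simp: bounded_iff)
  show thesis
  proof (rule that)
    fix r :: real assume "0 < r"
    have "\<bar>Im (gam W m s r)\<bar> = \<bar>Im s + of_int m * Omega W r\<bar>"
      by (simp add: gam_def)
    also have "\<dots> \<le> \<bar>Im s\<bar> + \<bar>of_int m\<bar> * \<bar>Omega W r\<bar>"
      by (simp add: abs_mult abs_triangle_ineq[THEN order_trans])
    also have "\<dots> \<le> \<bar>Im s\<bar> + \<bar>of_int m\<bar> * B"
      using abs_Omega_le[OF W_cont B \<open>0 < r\<close>] by (simp add: mult_left_mono)
    finally show "\<bar>Im (gam W m s r)\<bar> \<le> \<bar>Im s\<bar> + \<bar>of_int m\<bar> * B" .
  qed
qed

theorem proposition2p3:
  fixes W W' :: "real \<Rightarrow> real"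
    and m :: int and s :: complex
    and u u' g' :: "real \<Rightarrow> complex"
  assumes W_deriv: "\<And>r. r \<ge> 0 \<Longrightarrow> (W has_real_derivative W' r) (at r within {0..})"
    and W'_cont: "continuous_on {0..} W'"
    and W_bdd: "bounded (W ` {0..})"
    and W'_bdd: "bounded (W' ` {0..})"
    and W_mono: "mono_on {0..} W \<or> monotone_on {0..} (\<le>) (\<ge>) W"
    and m_nz: "m \<noteq> 0"
    and s_re: "Re s \<noteq> 0"
    and u_deriv: "\<And>r. r > 0 \<Longrightarrow> (u has_vector_derivative u' r) (at r)"
    and flux_deriv: "\<And>r. r > 0 \<Longrightarrow>
        ((\<lambda>t. complex_of_real (t\<^sup>2) * u' t + complex_of_real t * u t) has_vector_derivative g' r) (at r)"
    and eqn: "\<And>r. r > 0 \<Longrightarrow>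
        - g' r + (of_int (m\<^sup>2) + \<i> * of_int m * complex_of_real (r * W' r) / gam W m s r) * u r = 0"
    and u_L2: "(\<lambda>r. r * (cmod (u r))\<^sup>2) integrable_on {0<..}"
    and u'_L2: "(\<lambda>r. r * (cmod (u' r))\<^sup>2) integrable_on {0<..}"
  shows "\<forall>r>0. u r = 0"
proof -
  obtain \<epsilon> :: real where \<epsilon>: "\<epsilon> = 1 \<or> \<epsilon> = -1" "\<And>r. 0 < r \<Longrightarrow> 0 \<le> \<epsilon> * W' r"
    using monotone_derivative_sign[OF W_deriv W_mono] by blast
  have "continuous_on {0..} W"
    unfolding continuous_on_eq_continuous_within using W_deriv DERIV_continuous by (metis atLeast_iff)
  then obtain C where C: "\<And>r. 0 < r \<Longrightarrow> \<bar>Im (gam W m s r)\<bar> \<le> C"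
    using Im_gam_bounded W_bdd by blast
  define c where "c r = of_int m * (r * W' r)" for r
  have sign: "0 \<le> (sgn (of_int m) * \<epsilon>) * c r" if "0 < r" for r
  proof -
    have eq: "(sgn (of_int m) * \<epsilon>) * c r = \<bar>of_int m\<bar> * r * (\<epsilon> * W' r)"
      by (simp add: c_def abs_if sgn_if algebra_simps)
    show ?thesis
      unfolding eq using \<epsilon>(2)[OF that] that by simp
  qed
  obtain \<kappa> :: real where \<kappa>: "\<And>r. r \<in> {0<..} \<Longrightarrow> 0 \<le> Re ((1 - \<i> * \<kappa>) * \<i> * (c r / gam W m s r))"
    by (rule exists_rotation_Re_nonneg[of "{0<..}" "gam W m s" "Re s" C "sgn (of_int m) * \<epsilon>" c])
       (use s_re C sign \<epsilon>(1) m_nz in \<open>auto simp: gam_def sgn_if\<close>)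
  show ?thesis
  proof (intro allI impI)
    fix r :: real assume "0 < r"
    show "u r = 0"
    proof (rule flux_solution_vanishes[where \<kappa> = \<kappa>, OF u_deriv flux_deriv _ _ _ u_L2 \<open>0 < r\<close>])
      show "g' t = (of_real (of_int (m\<^sup>2)) + \<i> * (c t / gam W m s t)) * u t" if "0 < t" for t
        using eqn[OF that] by (simp add: c_def algebra_simps)
    qed (use m_nz \<kappa> in auto)
  qed
qed

end
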